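(* Let $\beta\in(0,1]$, $m\ge0$ an integer, and $\theta=(k_r)$ a lacunary sequence. If $\liminf_r q_r>1$, then $S^\beta(F,\Delta^m)\subset S_\theta^\beta(F,\Delta^m)$.
   Context: A fuzzy number is a map $X:\mathbb{R}\to[0,1]$ which is normal, fuzzy convex, upper semicontinuous, with compact closure of $\{t:X(t)>0\}$; $L(\mathbb{R})$ is the set of fuzzy numbers. Level sets $[X]^\alpha=\{t:X(t)\ge\alpha\}$ ($\alpha\in(0,1]$), $[X]^0=\overline{\{t:X(t)>0\}}$, are compact intervals $[u^\alpha,v^\alpha]$. Subtraction: $[X-Y]^\alpha=[u_1^\alpha-v_2^\alpha,v_1^\alpha-u_2^\alpha]$. Metric: $d(X,Y)=\sup_{\alpha\in[0,1]}\max\{|u_1^\alpha-u_2^\alpha|,|v_1^\alpha-v_2^\alpha|\}$. $(\Delta^0X)_k=X_k$, $(\Delta^1X)_k=X_k-X_{k+1}$, $(\Delta^mX)_k=(\Delta^1(\Delta^{m-1}X))_k$. A lacunary sequence is an increasing integer sequence $\theta=(k_r)_{r\ge0}$ with $k_0=0$, $h_r=k_r-k_{r-1}\to\infty$; $I_r=(k_{r-1},k_r]$, $q_r=k_r/k_{r-1}$. $S_\theta^\beta(F,\Delta^m)$: sequences $X$ of fuzzy numbers with some $X_0\in L(\mathbb{R})$ such that for all $\varepsilon>0$, $\lim_r\frac{1}{h_r^\beta}|\{k\in I_r:d(\Delta^mX_k,X_0)\ge\varepsilon\}|=0$. $S^\beta(F,\Delta^m)$: sequences $X$ with some $X_0\in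 L(\mathbb{R})$ such that for all $\varepsilon>0$, $\lim_{n\to\infty}\frac{1}{n^\beta}|\{k\le n:d(\Delta^mX_k,X_0)\ge\varepsilon\}|=0$. *)

theory Defs
  imports "HOL-Analysis.Analysis"
begin

type_synonym fuzzy = "real \<Rightarrow> real"

definition fuzzy_number :: "fuzzy \<Rightarrow> bool" where
  "fuzzy_number X \<longleftrightarrow>
     (\<forall>t. 0 \<le> X t \<and> X t \<le> 1) \<and>
     (\<exists>t. X t = 1) \<and>
     (\<forall>s t l. 0 \<le> l \<and> l \<le> 1 \<longrightarrow> min (X s) (X t) \<le> X (l * s + (1 - l) * t)) \<and>
     (\<forall>t a. X t < a \<longrightarrow> (\<forall>\<^sub>F s in at t. X s < a)) \<and>
     compact (closure {t. X t > 0})"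

definition level :: "fuzzy \<Rightarrow> real \<Rightarrow> real set" where
  "level X \<alpha> = (if \<alpha> > 0 then {t. X t \<ge> \<alpha>} else closure {t. X t > 0})"

definition lo :: "fuzzy \<Rightarrow> real \<Rightarrow> real" where
  "lo X \<alpha> = Inf (level X \<alpha>)"

definition hi :: "fuzzy \<Rightarrow> real \<Rightarrow> real" where
  "hi X \<alpha> = Sup (level X \<alpha>)"

text \<open>Subtraction: the fuzzy number whose \<alpha>-level sets are
  [lo X \<alpha> - hi Y \<alpha>, hi X \<alpha> - lo Y \<alpha>]; its membership function is recovered
  from the level sets by the representation X(t) = sup {\<alpha> \<in> [0,1]. t \<in> [X]^\<alpha>}.\<close>
definition fsub :: "fuzzy \<Rightarrow> fuzzy \<Rightarrow> fuzzy" where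
  "fsub X Y = (\<lambda>t. Sup (insert 0 {\<alpha>. \<alpha> \<in> {0..1} \<and>
                  t \<in> {lo X \<alpha> - hi Y \<alpha> .. hi X \<alpha> - lo Y \<alpha>}}))"

definition fdist :: "fuzzy \<Rightarrow> fuzzy \<Rightarrow> real" where
  "fdist X Y = (SUP \<alpha>\<in>{0..1}. max \<bar>lo X \<alpha> - lo Y \<alpha>\<bar> \<bar>hi X \<alpha> - hi Y \<alpha>\<bar>)"

fun fdelta :: "nat \<Rightarrow> (nat \<Rightarrow> fuzzy) \<Rightarrow> nat \<Rightarrow> fuzzy" where
  "fdelta 0 X k = X k"
| "fdelta (Suc m) X k = fsub (fdelta m X k) (fdelta m X (Suc k))"

definition lacunary :: "(nat \<Rightarrow> nat) \<Rightarrow> bool" where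
  "lacunary \<theta> \<longleftrightarrow> \<theta> 0 = 0 \<and> strict_mono \<theta> \<and>
     filterlim (\<lambda>r. real (\<theta> (Suc r) - \<theta> r)) at_top sequentially"

text \<open>Sequences are indexed by k \<ge> 1 (the value at index 0 is irrelevant to the densities).\<close>
definition S_beta :: "real \<Rightarrow> nat \<Rightarrow> (nat \<Rightarrow> fuzzy) set" where
  "S_beta \<beta> m = {X. (\<forall>k. fuzzy_number (X k)) \<and>
     (\<exists>X0. fuzzy_number X0 \<and> (\<forall>\<epsilon>>0.
        (\<lambda>n. real (card {k \<in> {1..n}. fdist (fdelta m X k) X0 \<ge> \<epsilon>}) / real n powr \<beta>)
          \<longlonglongrightarrow> 0))}"

text \<open>h_(r+1) = \<theta>(r+1) - \<theta> r and I_(r+1) = (\<theta> r, \<theta> (r+1)].\<close>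
definition S_theta_beta :: "(nat \<Rightarrow> nat) \<Rightarrow> real \<Rightarrow> nat \<Rightarrow> (nat \<Rightarrow> fuzzy) set" where
  "S_theta_beta \<theta> \<beta> m = {X. (\<forall>k. fuzzy_number (X k)) \<and>
     (\<exists>X0. fuzzy_number X0 \<and> (\<forall>\<epsilon>>0.
        (\<lambda>r. real (card {k \<in> {\<theta> r<..\<theta> (Suc r)}. fdist (fdelta m X k) X0 \<ge> \<epsilon>})
              / real (\<theta> (Suc r) - \<theta> r) powr \<beta>)
          \<longlonglongrightarrow> 0))}"

end

theory Submission
  imports Defs
begin

text \<open>If \<open>q\<^sub>r \<ge> c > 1\<close> eventually, then \<open>k\<^sub>r \<le> c/(c-1) \<cdot> h\<^sub>r\<close>, so the count of bad indices
  in \<open>I\<^sub>r\<close>, divided by \<open>h\<^sub>r\<^sup>\<beta>\<close>, is at most \<open>(c/(c-1))\<^sup>\<beta>\<close> times the count of bad indices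
  in \<open>[1, k\<^sub>r]\<close> divided by \<open>k\<^sub>r\<^sup>\<beta>\<close>, which tends to zero along the subsequence \<open>(k\<^sub>r)\<close>.\<close>

lemma liminf_ratio_gt_1_imp_eventually_le_mult_gap:
  fixes x :: "nat \<Rightarrow> real"
  assumes "liminf (\<lambda>r. ereal (x (Suc r) / x r)) > 1"
    and "eventually (\<lambda>r. 0 < x r) sequentially"
  obtains K where "K > 0" "eventually (\<lambda>r. x (Suc r) \<le> K * (x (Suc r) - x r)) sequentially"
proof -
  obtain c :: real where "1 < ereal c" and c: "ereal c < liminf (\<lambda>r. ereal (x (Suc r) / x r))"
    using ereal_dense2[OF assms(1)] by blast
  then have "1 < c" by simp
  have "eventually (\<lambda>r. x (Suc r) \<le> c / (c - 1) * (x (Suc r) - x r)) sequentially"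
    using less_LiminfD[OF c] assms(2)
  proof eventually_elim
    case (elim r)
    then have "c * x r < x (Suc r)" by (simp add: field_simps)
    with \<open>1 < c\<close> show ?case by (simp add: field_simps)
  qed
  moreover have "c / (c - 1) > 0" using \<open>1 < c\<close> by simp
  ultimately show thesis using that by blast
qed

lemma tendsto_zero_density_along_comparable_gaps:
  fixes f g h :: "nat \<Rightarrow> real" and s :: "nat \<Rightarrow> nat"
  assumes f: "(\<lambda>n. f n / real n powr \<beta>) \<longlonglongrightarrow> 0"
    and s: "filterlim s at_top sequentially"
    and "0 \<le> \<beta>" "0 < K"
    and bound: "eventually (\<lambda>r. 0 < s r \<and> 0 < h r \<and> real (s r) \<le> K * h r \<and>
                                  0 \<le> g r \<and> g r \<le> f (s r)) sequentially"
  shows "(\<lambda>r. g r / h r powr \<beta>) \<longlonglongrightarrow> 0"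
proof (rule tendsto_sandwich[OF _ _ tendsto_const])
  have "(\<lambda>r. f (s r) / real (s r) powr \<beta>) \<longlonglongrightarrow> 0"
    using filterlim_compose[OF f s] .
  then show "(\<lambda>r. f (s r) / real (s r) powr \<beta> * K powr \<beta>) \<longlonglongrightarrow> 0"
    by (rule tendsto_mult_left_zero)
  show "eventually (\<lambda>r. 0 \<le> g r / h r powr \<beta>) sequentially"
    using bound by eventually_elim simp
  show "eventually (\<lambda>r. g r / h r powr \<beta> \<le> f (s r) / real (s r) powr \<beta> * K powr \<beta>) sequentially"
    using bound
  proof eventually_elim
    case (elim r)
    then have "real (s r) powr \<beta> \<le> (K * h r) powr \<beta>"
      using \<open>0 \<le> \<beta>\<close> by (intro powr_mono2) auto
    also have "\<dots> = K powr \<beta> * h r powr \<beta>"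
      using \<open>0 < K\<close> elim by (simp add: powr_mult)
    finally have "real (s r) powr \<beta> \<le> K powr \<beta> * h r powr \<beta>" .
    then have "f (s r) * real (s r) powr \<beta> \<le> f (s r) * (K powr \<beta> * h r powr \<beta>)"
      using elim by (intro mult_left_mono) auto
    then have "f (s r) / h r powr \<beta> \<le> f (s r) / real (s r) powr \<beta> * K powr \<beta>"
      using elim by (simp add: field_simps)
    moreover have "g r / h r powr \<beta> \<le> f (s r) / h r powr \<beta>"
      using elim by (simp add: divide_right_mono)
    ultimately show ?case by linarith
  qed
qed

lemma lacunary_less_Suc:
  assumes "lacunary \<theta>"
  shows "\<theta> r < \<theta> (Suc r)"
  using assms by (simp add: lacunary_def strict_mono_Suc_iff)

lemma lacunary_pos:
  assumes "lacunary \<theta>" and "0 < r"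
  shows "0 < \<theta> r"
  using assms strict_mono_less[of \<theta> 0 r] by (simp add: lacunary_def)

lemma lacunary_Suc_filterlim_at_top:
  assumes "lacunary \<theta>"
  shows "filterlim (\<lambda>r. \<theta> (Suc r)) at_top sequentially"
  using assms filterlim_compose[OF filterlim_subseq filterlim_Suc, of \<theta>]
  by (simp add: lacunary_def o_def)

lemma lacunary_eventually_le_mult_gap:
  assumes "lacunary \<theta>" and "liminf (\<lambda>r. ereal (real (\<theta> (Suc r)) / real (\<theta> r))) > 1"
  obtains K where "K > 0"
    "eventually (\<lambda>r. real (\<theta> (Suc r)) \<le> K * real (\<theta> (Suc r) - \<theta> r)) sequentially"
proof -
  have "eventually (\<lambda>r. 0 < real (\<theta> r)) sequentially"
    using eventually_gt_at_top[of 0] by eventually_elim (simp add: lacunary_pos[OF assms(1)])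
  then obtain K where "K > 0" and
    "eventually (\<lambda>r. real (\<theta> (Suc r)) \<le> K * (real (\<theta> (Suc r)) - real (\<theta> r))) sequentially"
    using liminf_ratio_gt_1_imp_eventually_le_mult_gap[OF assms(2)] by blast
  with that show thesis
    using lacunary_less_Suc[OF assms(1)] by (simp add: less_imp_le of_nat_diff)
qed

theorem theorem2p9:
  fixes \<beta> :: real and m :: nat and \<theta> :: "nat \<Rightarrow> nat"
  assumes "0 < \<beta>" and "\<beta> \<le> 1"
    and "lacunary \<theta>"
    and "liminf (\<lambda>r. ereal (real (\<theta> (Suc r)) / real (\<theta> r))) > 1"
  shows "S_beta \<beta> m \<subseteq> S_theta_beta \<theta> \<beta> m"
proof
  fix X assume "X \<in> S_beta \<beta> m"
  then obtain X0 where X: "\<forall>k. fuzzy_number (X k)" and X0: "fuzzy_number X0" and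
    dens: "\<And>\<epsilon>. \<epsilon> > 0 \<Longrightarrow> (\<lambda>n. real (card {k \<in> {1..n}. fdist (fdelta m X k) X0 \<ge> \<epsilon>})
                                   / real n powr \<beta>) \<longlonglongrightarrow> 0"
    unfolding S_beta_def by blast
  obtain K where "K > 0" and
    K: "eventually (\<lambda>r. real (\<theta> (Suc r)) \<le> K * real (\<theta> (Suc r) - \<theta> r)) sequentially"
    using lacunary_eventually_le_mult_gap[OF assms(3,4)] by blast
  show "X \<in> S_theta_beta \<theta> \<beta> m"
    unfolding S_theta_beta_def
  proof (intro CollectI conjI X X0 exI[of _ X0] allI impI)
    fix \<epsilon> :: real assume "\<epsilon> > 0"
    show "(\<lambda>r. real (card {k \<in> {\<theta> r<..\<theta> (Suc r)}. fdist (fdelta m X k) X0 \<ge> \<epsilon>})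
              / real (\<theta> (Suc r) - \<theta> r) powr \<beta>) \<longlonglongrightarrow> 0"
      using K \<open>0 < \<beta>\<close> lacunary_less_Suc[OF assms(3)] lacunary_pos[OF assms(3)]
      by (intro tendsto_zero_density_along_comparable_gaps[OF dens[OF \<open>\<epsilon> > 0\<close>]
            lacunary_Suc_filterlim_at_top[OF assms(3)] _ \<open>K > 0\<close>])
         (auto elim!: eventually_mono intro!: card_mono)
  qed
qed

end
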